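(* Let $\mathscr B=\{b_k:k\ge1\}$ and $\mathscr B'=\{b'_k:k\ge1\}$ be subsets of $\{2,3,\dots\}$, each consisting of pairwise coprime integers with $\sum_k 1/b_k<\infty$ and $\sum_k1/b'_k<\infty$. Then: (a) $X_{\mathscr B}\subset X_{\mathscr B'}$ if and only if every $b'\in\mathscr B'$ is divisible by some $b\in\mathscr B$; (b) $X_{\mathscr B}=X_{\mathscr B'}$ if and only if $\mathscr B=\mathscr B'$.
   Context: For such a set $\mathscr B$, $X_{\mathscr B}$ denotes the $\mathscr B$-free subshift: the set of $y\in\{0,1\}^{\mathbb Z}$ all of whose finite blocks occur in $\eta$, where $\eta(n)=1$ iff $b\nmid n$ for all $b\in\mathscr B$ (else $0$). Equivalently, $X_{\mathscr B}$ is the set of $y\in\{0,1\}^{\mathbb Z}$ whose support $\mathrm{supp}(y)=\{n:y(n)=1\}$ is $\mathscr B$-admissible, i.e. $|\mathrm{supp}(y)\bmod b|<b$ for every $b\in\mathscr B$. *)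

theory Defs
  imports "HOL-Analysis.Analysis"
begin

text \<open>Configurations y in {0,1}^Z are modelled as predicates int => bool (True = 1).\<close>

definition eta :: "nat set \<Rightarrow> int \<Rightarrow> bool" where
  "eta B n \<longleftrightarrow> (\<forall>b\<in>B. \<not> int b dvd n)"

definition Bfree_subshift :: "nat set \<Rightarrow> (int \<Rightarrow> bool) set" where
  "Bfree_subshift B = {y. \<forall>m n. \<exists>k. \<forall>i. m \<le> i \<and> i \<le> n \<longrightarrow> y i = eta B (i + k)}"

definition admissible_base :: "nat set \<Rightarrow> bool" where
  "admissible_base B \<longleftrightarrow> B \<subseteq> {2..} \<and> infinite B \<and> pairwise coprime B
     \<and> (\<lambda>b. 1 / real b) summable_on B"

end

theory Submission
  imports Defs "HOL-Number_Theory.Cong"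
begin

(* A configuration y lies in X_B exactly when its support misses a residue class modulo every
   b in B. For sufficiency, a window of y is realised as a block
   of eta shifted by k: the Chinese remainder theorem fixes k modulo the small elements of B
   (keeping the ones of y off their multiples) and modulo one element larger than the window for
   each zero of y (placing it on a multiple); a count along the progression k + M t, with M the
   product of these moduli, shows that since sum 1/b converges some t keeps every other element
   of B from dividing a one of y.
   Part (a) then reduces to building, when some b' in B' has no divisor in B, a B-admissible
   configuration meeting every class modulo b'; part (b) follows from (a) in both directions,
   because in a pairwise coprime set mutual divisibility forces equality. *)

section \<open>Avoiding divisors along arithmetic progressions\<close>

lemma summable_on_tail_small:
  fixes f :: "nat \<Rightarrow> real"
  assumes "f summable_on B" "0 < e"
  obtains T where "\<And>G. G \<subseteq> B \<Longrightarrow> (\<forall>b\<in>G. T < b) \<Longrightarrow> infsum f G \<le> e"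
proof -
  obtain S where "(f has_sum S) B" using assms(1) summable_on_def by blast
  then have "\<forall>\<^sub>F X in finite_subsets_at_top B. dist (sum f X) S < e / 2"
    using assms(2) unfolding has_sum_def tendsto_iff by (metis half_gt_zero)
  then obtain X where X: "finite X" "X \<subseteq> B"
    and close: "\<And>Y. finite Y \<Longrightarrow> X \<subseteq> Y \<Longrightarrow> Y \<subseteq> B \<Longrightarrow> dist (sum f Y) S < e / 2"
    unfolding eventually_finite_subsets_at_top by metis
  show thesis
  proof
    fix G assume G: "G \<subseteq> B" "\<forall>b\<in>G. Max (insert 0 X) < b"
    show "infsum f G \<le> e"
    proof (rule infsum_le_finite_sums)
      show "f summable_on G" using assms(1) G(1) by (rule summable_on_subset)
      fix H assume H: "finite H" "H \<subseteq> G"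
      have "X \<inter> H = {}" using G(2) H(2) X(1) by fastforce
      then have "sum f (X \<union> H) = sum f X + sum f H" using X(1) H(1) by (simp add: sum.union_disjoint)
      moreover have "dist (sum f (X \<union> H)) S < e / 2" using X G H by (intro close) auto
      moreover have "dist (sum f X) S < e / 2" using X by (intro close) auto
      ultimately show "sum f H \<le> e" unfolding dist_real_def by linarith
    qed
  qed
qed

lemma card_le_threshold_plus_sum_inverse:
  assumes "finite G" "\<And>b. b \<in> G \<Longrightarrow> 0 < b \<and> b \<le> X"
  shows "real (card G) \<le> real T + real X * (\<Sum>b\<in>{b\<in>G. T < b}. 1 / real b)"
proof -
  define large where "large = {b\<in>G. T < b}"
  have "finite large" unfolding large_def using assms(1) by simp
  have "G \<subseteq> {1..T} \<union> large" using assms(2) unfolding large_def by force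
  then have "card G \<le> T + card large"
    by (metis card_Un_le card_atLeastAtMost diff_Suc_1 \<open>finite large\<close> card_mono
        finite_UnI finite_atLeastAtMost order_trans)
  moreover have "real (card large) = (\<Sum>b\<in>large. 1)" by simp
  moreover have "\<dots> \<le> (\<Sum>b\<in>large. real X / real b)"
    using assms(2) by (intro sum_mono) (simp add: large_def)
  moreover have "\<dots> = real X * (\<Sum>b\<in>large. 1 / real b)" by (simp add: sum_distrib_left)
  ultimately show ?thesis unfolding large_def by linarith
qed

lemma card_progression_dvd_le:
  fixes a M :: int
  assumes "0 < b" "coprime (int b) M"
  shows "real (card {t\<in>{0..<int L}. int b dvd a + M * t}) \<le> real L / real b + 1"
proof -
  define R where "R = {t\<in>{0..<int L}. int b dvd a + M * t}"
  have "inj_on (\<lambda>t. t div int b) R"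
  proof (rule inj_onI)
    fix s t assume "s \<in> R" "t \<in> R" and div_eq: "s div int b = t div int b"
    then have "int b dvd (a + M * s) - (a + M * t)" unfolding R_def by (intro dvd_diff) auto
    then have "int b dvd M * (s - t)" by (simp add: algebra_simps)
    then have "s mod int b = t mod int b"
      using assms(2) by (simp add: coprime_dvd_mult_right_iff mod_eq_dvd_iff)
    then show "s = t" using div_eq by (metis div_mult_mod_eq)
  qed
  moreover have "(\<lambda>t. t div int b) ` R \<subseteq> {0..<(int L - 1) div int b + 1}"
  proof clarify
    fix t assume "t \<in> R"
    then have "0 \<le> t" "t \<le> int L - 1" unfolding R_def by auto
    then show "t div int b \<in> {0..<(int L - 1) div int b + 1}"
      using assms(1) by (simp add: pos_imp_zdiv_nonneg_iff zdiv_mono1)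
  qed
  ultimately have "card R \<le> nat ((int L - 1) div int b + 1)"
    by (metis card_atLeastLessThan_int card_image card_mono finite_atLeastLessThan_int diff_zero)
  moreover have "-1 \<le> (int L - 1) div int b"
    using zdiv_mono1[of "- 1" "int L - 1" "int b"] div_eq_minus1[of "int b"] assms(1) by simp
  moreover have "real_of_int ((int L - 1) div int b) \<le> real_of_int (int L - 1) / real_of_int (int b)"
    by (rule real_of_int_div4)
  moreover have "real_of_int (int L - 1) / real_of_int (int b) \<le> real L / real b"
    using assms(1) by (simp add: divide_right_mono)
  ultimately show ?thesis unfolding R_def by linarith
qed

lemma card_progression_some_dvd_le:
  fixes A :: "int set" and C :: "nat set" and M K :: int
  assumes "finite A" "0 < M" "\<And>a. a \<in> A \<Longrightarrow> 0 < a \<and> a \<le> K"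
  shows "card {t\<in>{0..<int L}. \<exists>a\<in>A. \<exists>b\<in>C. int b dvd a + M * t}
    \<le> (\<Sum>a\<in>A. \<Sum>b\<in>{b\<in>C. int b \<le> K + M * int L}. card {t\<in>{0..<int L}. int b dvd a + M * t})"
proof -
  define C' where "C' = {b\<in>C. int b \<le> K + M * int L}"
  define R where "R a b = {t\<in>{0..<int L}. int b dvd a + M * t}" for a b
  have finite_R: "finite (R a b)" for a b
    unfolding R_def by (rule finite_subset[of _ "{0..<int L}"]) auto
  have "finite C'" unfolding C'_def by (rule finite_subset[of _ "{..nat (K + M * int L)}"]) auto
  have "{t\<in>{0..<int L}. \<exists>a\<in>A. \<exists>b\<in>C. int b dvd a + M * t} \<subseteq> (\<Union>a\<in>A. \<Union>b\<in>C'. R a b)"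
  proof clarify
    fix t a b assume t: "t \<in> {0..<int L}" and "a \<in> A" "b \<in> C" and dvd: "int b dvd a + M * t"
    have "0 < a + M * t" "a + M * t \<le> K + M * int L"
      using assms(2) assms(3)[OF \<open>a \<in> A\<close>] t by (auto intro: add_pos_nonneg add_mono)
    then have "int b \<le> K + M * int L" using zdvd_imp_le[OF dvd] by linarith
    then show "t \<in> (\<Union>a\<in>A. \<Union>b\<in>C'. R a b)"
      using t dvd \<open>a \<in> A\<close> \<open>b \<in> C\<close> unfolding C'_def R_def by blast
  qed
  then have "card {t\<in>{0..<int L}. \<exists>a\<in>A. \<exists>b\<in>C. int b dvd a + M * t}
      \<le> card (\<Union>a\<in>A. \<Union>b\<in>C'. R a b)"
    using \<open>finite A\<close> \<open>finite C'\<close> finite_R by (intro card_mono) auto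
  also have "\<dots> \<le> (\<Sum>a\<in>A. \<Sum>b\<in>C'. card (R a b))"
    using \<open>finite A\<close> \<open>finite C'\<close> by (intro order_trans[OF card_UN_le] sum_mono card_UN_le)
  finally show ?thesis unfolding C'_def R_def .
qed

lemma card_progression_some_dvd_bound:
  fixes A :: "int set" and C :: "nat set" and M K :: int and L T n :: nat and d :: real
  assumes "finite A" "card A \<le> n" "0 < M" "0 \<le> K" "\<And>a. a \<in> A \<Longrightarrow> 0 < a \<and> a \<le> K"
    and C: "\<And>b. b \<in> C \<Longrightarrow> 0 < b \<and> coprime (int b) M"
    and summable: "(\<lambda>b. 1 / real b) summable_on C"
    and small: "real n * infsum (\<lambda>b. 1 / real b) C \<le> 1 / 2"
    and tail: "\<And>G. G \<subseteq> C \<Longrightarrow> (\<forall>b\<in>G. T < b) \<Longrightarrow> infsum (\<lambda>b. 1 / real b) G \<le> d"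
  shows "real (card {t\<in>{0..<int L}. \<exists>a\<in>A. \<exists>b\<in>C. int b dvd a + M * t})
    \<le> real L / 2 + real n * (T + real_of_int (K + M * int L) * d)"
proof -
  define X where "X = K + M * int L"
  define C' where "C' = {b\<in>C. int b \<le> X}"
  define s where "s = (\<Sum>b\<in>C'. 1 / real b)"
  have "finite C'" unfolding C'_def by (rule finite_subset[of _ "{..nat X}"]) auto
  have "0 \<le> X" using assms(3,4) by (simp add: X_def)
  have "0 \<le> s" unfolding s_def by (intro sum_nonneg) auto
  have "s \<le> infsum (\<lambda>b. 1 / real b) C"
    unfolding s_def using \<open>finite C'\<close> summable by (intro finite_sum_le_infsum) (auto simp: C'_def)
  then have "real n * s \<le> 1 / 2" by (rule order_trans[OF mult_left_mono[OF _ of_nat_0_le_iff] small])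
  then have "real L * (real n * s) \<le> real L * (1 / 2)" by (rule mult_left_mono) simp
  have "infsum (\<lambda>b. 1 / real b) {b\<in>C'. T < b} \<le> d" by (rule tail) (auto simp: C'_def)
  then have "(\<Sum>b\<in>{b\<in>C'. T < b}. 1 / real b) \<le> d" using \<open>finite C'\<close> by simp
  moreover have "real (card C') \<le> real T + real (nat X) * (\<Sum>b\<in>{b\<in>C'. T < b}. 1 / real b)"
    using \<open>finite C'\<close> C by (intro card_le_threshold_plus_sum_inverse) (auto simp: C'_def)
  ultimately have "real n * card C' \<le> real n * (T + real_of_int X * d)"
    using \<open>0 \<le> X\<close> mult_left_mono[of "\<Sum>b\<in>{b\<in>C'. T < b}. 1 / real b" d "real_of_int X"]
    by (intro mult_left_mono) auto
  have "real (card {t\<in>{0..<int L}. \<exists>a\<in>A. \<exists>b\<in>C. int b dvd a + M * t})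
      \<le> real (\<Sum>a\<in>A. \<Sum>b\<in>C'. card {t\<in>{0..<int L}. int b dvd a + M * t})"
    unfolding C'_def X_def using assms(1,3,5) by (intro of_nat_mono card_progression_some_dvd_le)
  also have "\<dots> = (\<Sum>a\<in>A. \<Sum>b\<in>C'. real (card {t\<in>{0..<int L}. int b dvd a + M * t}))"
    by simp
  also have "\<dots> \<le> (\<Sum>a\<in>A. \<Sum>b\<in>C'. real L / real b + 1)"
    using C by (intro sum_mono card_progression_dvd_le) (auto simp: C'_def)
  also have "\<dots> = real (card A) * (real L * s + card C')"
    by (simp add: sum.distrib sum_distrib_left s_def)
  also have "\<dots> \<le> real n * (real L * s + card C')"
    using \<open>card A \<le> n\<close> \<open>0 \<le> s\<close> by (intro mult_right_mono) auto
  also have "\<dots> \<le> real L / 2 + real n * (T + real_of_int X * d)"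
    using \<open>real L * (real n * s) \<le> real L * (1 / 2)\<close>
      \<open>real n * card C' \<le> real n * (T + real_of_int X * d)\<close>
    by (simp add: algebra_simps)
  finally show ?thesis unfolding X_def .
qed

lemma exists_shift_avoiding_divisors_pos:
  fixes A :: "int set" and C :: "nat set" and M :: int
  assumes "finite A" "card A \<le> n" "0 < M" "\<And>a. a \<in> A \<Longrightarrow> 0 < a"
    and C: "\<And>b. b \<in> C \<Longrightarrow> 0 < b \<and> coprime (int b) M"
    and summable: "(\<lambda>b. 1 / real b) summable_on C"
    and small: "real n * infsum (\<lambda>b. 1 / real b) C \<le> 1 / 2"
  shows "\<exists>t. \<forall>a\<in>A. \<forall>b\<in>C. \<not> int b dvd a + M * t"
proof (cases "A = {}")
  case False
  have "0 < n" using False \<open>finite A\<close> \<open>card A \<le> n\<close> card_gt_0_iff by fastforce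
  define K where "K = Max (insert 0 A)"
  have K: "0 \<le> K" "\<And>a. a \<in> A \<Longrightarrow> a \<le> K" using \<open>finite A\<close> by (auto simp: K_def)
  define d where "d = 1 / (8 * real n * real_of_int M)"
  have "0 < d" using \<open>0 < n\<close> \<open>0 < M\<close> by (simp add: d_def)
  then obtain T where T: "\<And>G. G \<subseteq> C \<Longrightarrow> (\<forall>b\<in>G. T < b) \<Longrightarrow> infsum (\<lambda>b. 1 / real b) G \<le> d"
    using summable_on_tail_small[OF summable] by blast
  define L where "L = 4 * (n * T + nat K) + 1"
  \<comment> \<open>d and L are chosen so that the bound below is at most \<open>7 L / 8\<close>\<close>
  define Bad where "Bad = {t\<in>{0..<int L}. \<exists>a\<in>A. \<exists>b\<in>C. int b dvd a + M * t}"
  have "real (card Bad) \<le> real L / 2 + real n * (T + real_of_int (K + M * int L) * d)"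
    unfolding Bad_def using assms(1-4) K C summable small T by (intro card_progression_some_dvd_bound) auto
  also have "\<dots> = real L / 2 + real n * T + real_of_int K / (8 * M) + real L / 8"
    using \<open>0 < n\<close> \<open>0 < M\<close> by (simp add: d_def field_simps)
  also have "\<dots> \<le> real L / 2 + real n * T + real_of_int K + real L / 8"
    using K(1) \<open>0 < M\<close> mult_left_mono[of 1 "8 * real_of_int M" "real_of_int K"]
    by (simp add: divide_le_eq)
  also have "\<dots> < real L"
    using K(1) unfolding L_def by (simp add: add_nonneg_pos)
  finally have "card Bad < card {0..<int L}" by simp
  moreover have "finite Bad" unfolding Bad_def by (rule finite_subset[of _ "{0..<int L}"]) auto
  ultimately have "\<not> {0..<int L} \<subseteq> Bad" by (meson card_mono leD)
  then obtain t where "t \<in> {0..<int L}" "t \<notin> Bad" by blast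
  then show ?thesis unfolding Bad_def by blast
qed simp

lemma exists_shift_avoiding_divisors:
  fixes A :: "int set" and C :: "nat set" and M :: int
  assumes "finite A" "card A \<le> n" "0 < M"
    and C: "\<And>b. b \<in> C \<Longrightarrow> 0 < b \<and> coprime (int b) M"
    and summable: "(\<lambda>b. 1 / real b) summable_on C"
    and small: "real n * infsum (\<lambda>b. 1 / real b) C \<le> 1 / 2"
  shows "\<exists>t. \<forall>a\<in>A. \<forall>b\<in>C. \<not> int b dvd a + M * t"
proof -
  define c where "c = Max (insert 0 (abs ` A)) + 1"
  define A' where "A' = (\<lambda>a. a + M * c) ` A"
  have "0 < a + M * c" if "a \<in> A" for a
  proof -
    have "\<bar>a\<bar> \<le> Max (insert 0 (abs ` A))" "0 \<le> Max (insert 0 (abs ` A))"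
      using \<open>finite A\<close> that by simp_all
    then have "- a < c" "0 \<le> c" unfolding c_def by linarith+
    moreover have "c \<le> M * c" using \<open>0 < M\<close> \<open>0 \<le> c\<close> mult_right_mono[of 1 M c] by simp
    ultimately show ?thesis by linarith
  qed
  then have pos: "\<And>a. a \<in> A' \<Longrightarrow> 0 < a" unfolding A'_def by blast
  have "finite A'" "card A' \<le> n"
    unfolding A'_def using \<open>finite A\<close> le_trans[OF card_image_le \<open>card A \<le> n\<close>] by auto
  then obtain t where "\<forall>a\<in>A'. \<forall>b\<in>C. \<not> int b dvd a + M * t"
    using exists_shift_avoiding_divisors_pos[OF _ _ \<open>0 < M\<close> pos C summable small] by blast
  then have "\<forall>a\<in>A. \<forall>b\<in>C. \<not> int b dvd a + M * (c + t)"
    unfolding A'_def by (simp add: distrib_left add.assoc)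
  then show ?thesis by blast
qed

lemma chinese_remainder_int:
  fixes I :: "nat set" and x :: "nat \<Rightarrow> int"
  assumes "finite I" "pairwise coprime I" "0 \<notin> I"
  shows "\<exists>k. \<forall>b\<in>I. [k = x b] (mod int b)"
proof -
  have "\<forall>i\<in>I. \<forall>j\<in>I. i \<noteq> j \<longrightarrow> coprime (id i) (id j)"
    using assms(2) unfolding pairwise_def by simp
  from chinese_remainder_nat[OF assms(1) this, where u = "\<lambda>b. nat (x b mod int b)"]
  obtain k :: nat where k: "\<forall>b\<in>I. [k = nat (x b mod int b)] (mod id b)" by blast
  have "[int k = x b] (mod int b)" if "b \<in> I" for b
  proof -
    have "0 < b" using assms(3) that by (metis gr0I)
    have "[k = nat (x b mod int b)] (mod b)" using k that by simp
    then have "[int k = int (nat (x b mod int b))] (mod int b)" by (simp only: cong_int_iff)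
    then show ?thesis using \<open>0 < b\<close> by simp
  qed
  then show ?thesis by blast
qed

lemma exists_cong_avoiding_divisors:
  fixes B I :: "nat set" and x :: "nat \<Rightarrow> int" and A :: "int set"
  assumes coprime: "pairwise coprime B" and "0 \<notin> B" and summable: "(\<lambda>b. 1 / real b) summable_on B"
    and "finite I" "I \<subseteq> B" "finite A" "card A \<le> n"
    and small: "real n * infsum (\<lambda>b. 1 / real b) (B - I) \<le> 1 / 2"
  shows "\<exists>k. (\<forall>b\<in>I. [k = x b] (mod int b)) \<and> (\<forall>a\<in>A. \<forall>b\<in>B - I. \<not> int b dvd a + k)"
proof -
  have "0 \<notin> I" using assms(2,5) by blast
  obtain k where k: "\<forall>b\<in>I. [k = x b] (mod int b)"
    using chinese_remainder_int[OF \<open>finite I\<close> pairwise_subset[OF coprime \<open>I \<subseteq> B\<close>] \<open>0 \<notin> I\<close>] by blast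
  define M where "M = (\<Prod>b\<in>I. int b)"
  have "0 < M" unfolding M_def using \<open>0 \<notin> I\<close> by (intro prod_pos) (metis of_nat_0_less_iff gr0I)
  have "coprime (int b) M" if "b \<in> B - I" for b
    unfolding M_def
  proof (rule prod_coprime_right)
    fix i assume "i \<in> I"
    then have "coprime b i" using that \<open>I \<subseteq> B\<close> by (intro pairwiseD[OF coprime]) auto
    then show "coprime (int b) (int i)" by simp
  qed
  moreover have "0 < b" if "b \<in> B - I" for b using that \<open>0 \<notin> B\<close> by (metis DiffD1 gr0I)
  moreover have "(\<lambda>b. 1 / real b) summable_on B - I" using summable by (rule summable_on_subset) blast
  moreover have "finite ((\<lambda>a. a + k) ` A)" "card ((\<lambda>a. a + k) ` A) \<le> n"
    using \<open>finite A\<close> le_trans[OF card_image_le \<open>card A \<le> n\<close>] by auto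
  ultimately obtain t where t: "\<forall>a\<in>(\<lambda>a. a + k) ` A. \<forall>b\<in>B - I. \<not> int b dvd a + M * t"
    using exists_shift_avoiding_divisors[OF _ _ \<open>0 < M\<close> _ _ small] by blast
  have "[k + M * t = x b] (mod int b)" if "b \<in> I" for b
  proof -
    have "[M * t = 0] (mod int b)"
      unfolding M_def cong_0_iff using \<open>finite I\<close> that by (simp add: dvd_prodI)
    then show ?thesis using cong_add[OF k[rule_format, OF that]] by fastforce
  qed
  moreover have "\<forall>a\<in>A. \<forall>b\<in>B - I. \<not> int b dvd a + (k + M * t)"
    using t by (simp add: add.assoc)
  ultimately show ?thesis by blast
qed

section \<open>Admissible configurations\<close>

(* B-admissibility of the support, |supp y mod b| < b, stated as: some class r mod b holds no 1 of y. *)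
definition B_admissible :: "nat set \<Rightarrow> (int \<Rightarrow> bool) \<Rightarrow> bool" where
  "B_admissible B y \<longleftrightarrow> (\<forall>b\<in>B. \<exists>r. \<forall>i. y i \<longrightarrow> \<not> int b dvd i - r)"

lemma B_admissible_dvd_mono:
  assumes "\<forall>b'\<in>B'. \<exists>b\<in>B. b dvd b'" "B_admissible B y"
  shows "B_admissible B' y"
  unfolding B_admissible_def
proof
  fix b' assume "b' \<in> B'"
  then obtain b where "b \<in> B" "b dvd b'" using assms(1) by blast
  then obtain r where "\<forall>i. y i \<longrightarrow> \<not> int b dvd i - r"
    using assms(2) unfolding B_admissible_def by blast
  then have "\<forall>i. y i \<longrightarrow> \<not> int b' dvd i - r" using \<open>b dvd b'\<close> by (meson dvd_trans int_dvd_int_iff)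
  then show "\<exists>r. \<forall>i. y i \<longrightarrow> \<not> int b' dvd i - r" ..
qed

lemma Bfree_subshift_imp_B_admissible:
  assumes y: "y \<in> Bfree_subshift B" and "0 \<notin> B"
  shows "B_admissible B y"
  unfolding B_admissible_def
proof (rule ballI, rule ccontr)
  fix b assume "b \<in> B" and "\<not> (\<exists>r. \<forall>i. y i \<longrightarrow> \<not> int b dvd i - r)"
  then obtain f where f: "\<And>r. y (f r) \<and> int b dvd f r - r" by metis
  have "0 < b" using \<open>b \<in> B\<close> \<open>0 \<notin> B\<close> by (metis gr0I)
  \<comment> \<open>the witnesses for all classes lie in one window,
    and its copy inside eta puts a 1 on a multiple of b\<close>
  define W where "W = f ` {0..<int b}"
  have "finite W" "W \<noteq> {}" using \<open>0 < b\<close> by (auto simp: W_def)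
  obtain k where k: "\<forall>i. Min W \<le> i \<and> i \<le> Max W \<longrightarrow> y i = eta B (i + k)"
    using y unfolding Bfree_subshift_def by blast
  define r where "r = (- k) mod int b"
  have "f r \<in> W" using \<open>0 < b\<close> by (simp add: W_def r_def)
  then have "eta B (f r + k)"
    using k f Min_le[OF \<open>finite W\<close> \<open>f r \<in> W\<close>] Max_ge[OF \<open>finite W\<close> \<open>f r \<in> W\<close>] by blast
  moreover have "int b dvd f r + k"
  proof -
    have "int b dvd r - (- k)" unfolding r_def using mod_eq_dvd_iff[of "(- k) mod int b" "int b" "- k"] by simp
    then show ?thesis using f dvd_add[of "int b" "f r - r" "r - (- k)"] by simp
  qed
  ultimately show False using \<open>b \<in> B\<close> unfolding eta_def by auto
qed

lemma dvd_shift_unique: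
  fixes i j k :: int
  assumes "b dvd i + k" "b dvd j + k" "\<bar>i - j\<bar> < b"
  shows "i = j"
proof (rule ccontr)
  assume "i \<noteq> j"
  have "b dvd (i + k) - (j + k)" using assms(1,2) by (rule dvd_diff)
  then have "b dvd \<bar>i - j\<bar>" by simp
  then show False using \<open>i \<noteq> j\<close> assms(3) zdvd_imp_le by fastforce
qed

lemma window_pattern_from_congruences:
  fixes y :: "int \<Rightarrow> bool" and r :: "nat \<Rightarrow> int" and g :: "int \<Rightarrow> nat"
  assumes r: "\<And>b i. b \<in> F \<Longrightarrow> y i \<Longrightarrow> \<not> int b dvd i - r b"
    and k_F: "\<And>b. b \<in> F \<Longrightarrow> [k = - r b] (mod int b)"
    and k_g: "\<And>z. m \<le> z \<Longrightarrow> z \<le> n \<Longrightarrow> \<not> y z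
      \<Longrightarrow> [k = - z] (mod int (g z)) \<and> nat (n - m) < g z"
    and "m \<le> i" "i \<le> n"
  shows "y i \<longleftrightarrow> (\<forall>b\<in>F \<union> g ` {z\<in>{m..n}. \<not> y z}. \<not> int b dvd i + k)"
proof
  assume "y i"
  show "\<forall>b\<in>F \<union> g ` {z\<in>{m..n}. \<not> y z}. \<not> int b dvd i + k"
  proof
    fix b assume "b \<in> F \<union> g ` {z\<in>{m..n}. \<not> y z}"
    then consider "b \<in> F" | z where "m \<le> z" "z \<le> n" "\<not> y z" "b = g z" by auto
    then show "\<not> int b dvd i + k"
    proof cases
      case 1
      have "int b dvd k + r b" using k_F[OF 1] by (simp add: cong_iff_dvd_diff)
      show ?thesis
      proof
        assume "int b dvd i + k"
        then have "int b dvd (i + k) - (k + r b)" using \<open>int b dvd k + r b\<close> by (rule dvd_diff)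
        then show False using r[OF 1 \<open>y i\<close>] by simp
      qed
    next
      case (2 z)
      then have "int b dvd z + k" "\<bar>i - z\<bar> < int b"
        using k_g[of z] \<open>m \<le> i\<close> \<open>i \<le> n\<close> by (auto simp: cong_iff_dvd_diff add.commute)
      moreover have "i \<noteq> z" using \<open>y i\<close> \<open>\<not> y z\<close> by blast
      ultimately show ?thesis using dvd_shift_unique by blast
    qed
  qed
next
  assume no_dvd: "\<forall>b\<in>F \<union> g ` {z\<in>{m..n}. \<not> y z}. \<not> int b dvd i + k"
  show "y i"
  proof (rule ccontr)
    assume "\<not> y i"
    then have "int (g i) dvd i + k"
      using k_g \<open>m \<le> i\<close> \<open>i \<le> n\<close> by (simp add: cong_iff_dvd_diff add.commute)
    then show False using no_dvd \<open>\<not> y i\<close> \<open>m \<le> i\<close> \<open>i \<le> n\<close> by auto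
  qed
qed

lemma window_congruence_targets:
  assumes base: "admissible_base B" and y: "B_admissible B y"
  obtains I x where "finite I" "I \<subseteq> B"
    "real (card {i\<in>{m..n}. y i}) * infsum (\<lambda>b. 1 / real b) (B - I) \<le> 1 / 2"
    "\<And>k i. \<forall>b\<in>I. [k = x b] (mod int b) \<Longrightarrow> m \<le> i \<Longrightarrow> i \<le> n
      \<Longrightarrow> y i \<longleftrightarrow> (\<forall>b\<in>I. \<not> int b dvd i + k)"
proof -
  have "infinite B" and summable: "(\<lambda>b. 1 / real b) summable_on B"
    using base unfolding admissible_base_def by auto
  obtain r where r: "\<And>b i. b \<in> B \<Longrightarrow> y i \<Longrightarrow> \<not> int b dvd i - r b"
    using y unfolding B_admissible_def by metis
  define S where "S = {i\<in>{m..n}. y i}"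
  define Z where "Z = {i\<in>{m..n}. \<not> y i}"
  have "finite Z" unfolding Z_def by (rule finite_subset[of _ "{m..n}"]) auto
  define e where "e = 1 / (2 * (real (card S) + 1))"
  obtain T where T: "\<And>G. G \<subseteq> B \<Longrightarrow> (\<forall>b\<in>G. T < b) \<Longrightarrow> infsum (\<lambda>b. 1 / real b) G \<le> e"
    using summable_on_tail_small[OF summable, of e] by (auto simp: e_def)
  define F where "F = {b\<in>B. b \<le> T}"
  define N where "N = max T (nat (n - m))"
  have "infinite {b\<in>B. N < b}"
    using Diff_infinite_finite[OF finite_atMost \<open>infinite B\<close>, of N] by (simp add: set_diff_eq not_le)
  then obtain G where G: "finite G" "card G = card Z" "G \<subseteq> {b\<in>B. N < b}"
    by (meson infinite_arbitrarily_large)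
  then obtain g where g: "inj_on g Z" "g ` Z \<subseteq> {b\<in>B. N < b}"
    using card_le_inj[OF \<open>finite Z\<close> \<open>finite G\<close>] by (metis order_refl subset_trans)
  \<comment> \<open>each zero z gets its own modulus \<open>g z > n - m\<close>,
    which divides no other \<open>i + k\<close> of the window\<close>
  define I where "I = F \<union> g ` Z"
  define x where "x b = (if b \<in> F then - r b else - inv_into Z g b)" for b
  have "finite I" "I \<subseteq> B"
    using \<open>finite Z\<close> g(2) finite_subset[of F "{..T}"] by (auto simp: I_def F_def)
  have "real (card S) * infsum (\<lambda>b. 1 / real b) (B - I) \<le> real (card S) * e"
    by (intro mult_left_mono T) (auto simp: I_def F_def)
  also have "\<dots> \<le> 1 / 2" by (simp add: e_def field_simps)
  finally have small: "real (card S) * infsum (\<lambda>b. 1 / real b) (B - I) \<le> 1 / 2" .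
  have "y i \<longleftrightarrow> (\<forall>b\<in>I. \<not> int b dvd i + k)"
    if k: "\<forall>b\<in>I. [k = x b] (mod int b)" and "m \<le> i" "i \<le> n" for k i
    unfolding I_def Z_def
  proof (rule window_pattern_from_congruences[OF _ _ _ that(2,3)])
    show "[k = - r b] (mod int b)" if "b \<in> F" for b
      using k[rule_format, of b] that by (simp add: I_def x_def)
    show "[k = - z] (mod int (g z)) \<and> nat (n - m) < g z" if "m \<le> z" "z \<le> n" "\<not> y z" for z
    proof -
      have "z \<in> Z" using that by (simp add: Z_def)
      then have "g z \<notin> F" "nat (n - m) < g z" using g(2) by (auto simp: F_def N_def)
      then show ?thesis
        using k[rule_format, of "g z"] \<open>z \<in> Z\<close> inv_into_f_f[OF g(1) \<open>z \<in> Z\<close>]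
        by (simp add: I_def x_def)
    qed
  qed (use r in \<open>auto simp: F_def\<close>)
  with \<open>finite I\<close> \<open>I \<subseteq> B\<close> small show thesis unfolding S_def by (rule that)
qed

lemma B_admissible_imp_Bfree_subshift:
  assumes base: "admissible_base B" and y: "B_admissible B y"
  shows "y \<in> Bfree_subshift B"
  unfolding Bfree_subshift_def
proof (intro CollectI allI)
  fix m n :: int
  have B: "pairwise coprime B" "0 \<notin> B" and summable: "(\<lambda>b. 1 / real b) summable_on B"
    using base unfolding admissible_base_def by auto
  obtain I x where I: "finite I" "I \<subseteq> B"
    and small: "real (card {i\<in>{m..n}. y i}) * infsum (\<lambda>b. 1 / real b) (B - I) \<le> 1 / 2"
    and targets: "\<And>k i. \<forall>b\<in>I. [k = x b] (mod int b) \<Longrightarrow> m \<le> i \<Longrightarrow> i \<le> n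
      \<Longrightarrow> y i \<longleftrightarrow> (\<forall>b\<in>I. \<not> int b dvd i + k)"
    by (rule window_congruence_targets[OF base y, where m = m and n = n]) blast
  have "finite {i\<in>{m..n}. y i}" by (rule finite_subset[of _ "{m..n}"]) auto
  then obtain k where k: "\<forall>b\<in>I. [k = x b] (mod int b)"
    and avoid: "\<forall>i\<in>{i\<in>{m..n}. y i}. \<forall>b\<in>B - I. \<not> int b dvd i + k"
    using exists_cong_avoiding_divisors[OF B summable I _ order_refl small] by blast
  have "y i \<longleftrightarrow> (\<forall>b\<in>B. \<not> int b dvd i + k)" if "m \<le> i" "i \<le> n" for i
    using targets[OF k that] avoid that \<open>I \<subseteq> B\<close> by auto
  then show "\<exists>k. \<forall>i. m \<le> i \<and> i \<le> n \<longrightarrow> y i = eta B (i + k)" by (auto simp: eta_def)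
qed

lemma Bfree_subshift_eq_B_admissible:
  assumes "admissible_base B"
  shows "Bfree_subshift B = {y. B_admissible B y}"
proof -
  have "0 \<notin> B" using assms by (auto simp: admissible_base_def)
  then show ?thesis
    using Bfree_subshift_imp_B_admissible B_admissible_imp_Bfree_subshift[OF assms] by blast
qed

section \<open>Inclusions between B-free subshifts\<close>

lemma exists_residue_class_missed:
  fixes S :: "int set"
  assumes "finite S" "card S < b"
  shows "\<exists>r. \<forall>i\<in>S. \<not> int b dvd i - r"
proof -
  have "card ((\<lambda>i. i mod int b) ` S) < card {0..<int b}"
    using le_less_trans[OF card_image_le[OF assms(1)] assms(2)] by simp
  then have "\<not> {0..<int b} \<subseteq> (\<lambda>i. i mod int b) ` S"
    using card_mono[OF finite_imageI[OF assms(1)]] by (meson leD)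
  then obtain r where r: "r \<in> {0..<int b}" "r \<notin> (\<lambda>i. i mod int b) ` S" by blast
  have "\<not> int b dvd i - r" if "i \<in> S" for i
  proof
    assume "int b dvd i - r"
    then have "i mod int b = r" using r(1) by (simp add: mod_eq_dvd_iff[symmetric])
    then show False using r(2) that by blast
  qed
  then show ?thesis by blast
qed

lemma exists_B_admissible_hitting_all_residues:
  assumes coprime: "pairwise coprime B" and "0 \<notin> B" "0 < c" and no_dvd: "\<forall>b\<in>B. \<not> b dvd c"
  shows "\<exists>y. B_admissible B y \<and> \<not> B_admissible {c} y"
proof -
  define F where "F = {b\<in>B. b \<le> c}"
  have "finite F" unfolding F_def by (rule finite_subset[of _ "{..c}"]) auto
  have "\<exists>e. \<forall>b\<in>F. [e = (if b dvd j then 1 else 0)] (mod int b)" for j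
    using chinese_remainder_int[OF \<open>finite F\<close>] pairwise_subset[OF coprime] \<open>0 \<notin> B\<close>
    by (simp add: F_def)
  then obtain e where e: "\<And>j b. b \<in> F \<Longrightarrow> [e j = (if b dvd j then 1 else 0)] (mod int b)" by metis
  \<comment> \<open>\<open>x j \<equiv> j (mod c)\<close>, and \<open>e j\<close> moves \<open>x j\<close> off 0 modulo each \<open>b \<le> c\<close>,
    which is possible because \<open>b\<close> does not divide \<open>c\<close>\<close>
  define x where "x j = int j + int c * e j" for j
  have x_F: "\<not> int b dvd x j" if "b \<in> F" for b j
  proof -
    have "[x j = int j + int c * (if b dvd j then 1 else 0)] (mod int b)"
      unfolding x_def using e[OF that] by (intro cong_add cong_scalar_left) auto
    then have "int b dvd x j \<longleftrightarrow> int b dvd int j + int c * (if b dvd j then 1 else 0)"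
      by (rule cong_dvd_iff)
    moreover have "\<not> b dvd c" using no_dvd that by (simp add: F_def)
    ultimately show ?thesis by (cases "b dvd j") (auto simp: dvd_add_right_iff)
  qed
  define y where "y i \<longleftrightarrow> i \<in> x ` {0..<c}" for i
  have "B_admissible B y" unfolding B_admissible_def
  proof
    fix b assume "b \<in> B"
    show "\<exists>r. \<forall>i. y i \<longrightarrow> \<not> int b dvd i - r"
    proof (cases "b \<in> F")
      case True
      then show ?thesis using x_F by (intro exI[of _ 0]) (auto simp: y_def)
    next
      case False
      then have "card (x ` {0..<c}) < b" using card_image_le[of "{0..<c}" x] \<open>b \<in> B\<close> by (simp add: F_def)
      then obtain r where "\<forall>i\<in>x ` {0..<c}. \<not> int b dvd i - r"
        using exists_residue_class_missed by blast
      then show ?thesis by (auto simp: y_def)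
    qed
  qed
  moreover have "\<not> B_admissible {c} y" unfolding B_admissible_def
  proof (simp, intro allI)
    fix r
    define j where "j = nat (r mod int c)"
    have "j < c" "int j = r mod int c" using \<open>0 < c\<close> by (simp_all add: j_def nat_less_iff)
    moreover have "int c dvd x j - int j" by (simp add: x_def)
    ultimately have "int c dvd x j - r"
      by (metis dvd_trans mod_eq_dvd_iff mod_mod_trivial dvd_refl)
    then show "\<exists>i. y i \<and> int c dvd i - r" using \<open>j < c\<close> unfolding y_def by auto
  qed
  ultimately show ?thesis by blast
qed

lemma Bfree_subshift_subset_iff:
  assumes base: "admissible_base B" and base': "admissible_base B'"
  shows "Bfree_subshift B \<subseteq> Bfree_subshift B' \<longleftrightarrow> (\<forall>b'\<in>B'. \<exists>b\<in>B. b dvd b')"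
  unfolding Bfree_subshift_eq_B_admissible[OF base] Bfree_subshift_eq_B_admissible[OF base']
proof
  assume sub: "{y. B_admissible B y} \<subseteq> {y. B_admissible B' y}"
  show "\<forall>b'\<in>B'. \<exists>b\<in>B. b dvd b'"
  proof (rule ballI, rule ccontr)
    fix c assume "c \<in> B'" "\<not> (\<exists>b\<in>B. b dvd c)"
    moreover have "pairwise coprime B" "0 \<notin> B" "0 < c"
      using base base' \<open>c \<in> B'\<close> by (auto simp: admissible_base_def)
    ultimately obtain y where "B_admissible B y" "\<not> B_admissible {c} y"
      using exists_B_admissible_hitting_all_residues by blast
    moreover have "B_admissible {c} y" if "B_admissible B' y"
      by (rule B_admissible_dvd_mono[OF _ that]) (use \<open>c \<in> B'\<close> in \<open>blast intro: dvd_refl\<close>)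
    ultimately show False using sub by blast
  qed
qed (use B_admissible_dvd_mono in blast)

lemma subset_if_divisors_cover:
  fixes P Q :: "nat set"
  assumes coprime: "pairwise coprime P" and "1 \<notin> P"
    and "\<forall>p\<in>P. \<exists>q\<in>Q. q dvd p" and "\<forall>q\<in>Q. \<exists>p\<in>P. p dvd q"
  shows "P \<subseteq> Q"
proof
  fix p assume "p \<in> P"
  then obtain q p' where "q \<in> Q" "q dvd p" "p' \<in> P" "p' dvd q" using assms(3,4) by blast
  then have "p' dvd p" using dvd_trans by blast
  have "p' = p"
  proof (rule ccontr)
    assume "p' \<noteq> p"
    then have "coprime p' p" using coprime \<open>p \<in> P\<close> \<open>p' \<in> P\<close> by (auto dest: pairwiseD)
    then have "p' = 1" using coprime_common_divisor_nat[OF _ dvd_refl \<open>p' dvd p\<close>] by blast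
    then show False using \<open>p' \<in> P\<close> \<open>1 \<notin> P\<close> by simp
  qed
  then have "q = p" using \<open>q dvd p\<close> \<open>p' dvd q\<close> by (simp add: dvd_antisym)
  then show "p \<in> Q" using \<open>q \<in> Q\<close> by simp
qed

theorem mainTheorem13:
  fixes B B' :: "nat set"
  assumes "admissible_base B" and "admissible_base B'"
  shows "(Bfree_subshift B \<subseteq> Bfree_subshift B' \<longleftrightarrow> (\<forall>b'\<in>B'. \<exists>b\<in>B. b dvd b'))
       \<and> (Bfree_subshift B = Bfree_subshift B' \<longleftrightarrow> B = B')"
proof -
  have part_a: "Bfree_subshift B \<subseteq> Bfree_subshift B' \<longleftrightarrow> (\<forall>b'\<in>B'. \<exists>b\<in>B. b dvd b')"
    and part_a': "Bfree_subshift B' \<subseteq> Bfree_subshift B \<longleftrightarrow> (\<forall>b\<in>B. \<exists>b'\<in>B'. b' dvd b)"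
    using Bfree_subshift_subset_iff assms by blast+
  have B: "pairwise coprime B" "1 \<notin> B" and B': "pairwise coprime B'" "1 \<notin> B'"
    using assms by (auto simp: admissible_base_def)
  have "Bfree_subshift B = Bfree_subshift B' \<longleftrightarrow> B = B'"
  proof
    assume "Bfree_subshift B = Bfree_subshift B'"
    then have "\<forall>b'\<in>B'. \<exists>b\<in>B. b dvd b'" "\<forall>b\<in>B. \<exists>b'\<in>B'. b' dvd b"
      using part_a part_a' by simp_all
    then show "B = B'"
      using subset_if_divisors_cover[OF B] subset_if_divisors_cover[OF B'] by (intro subset_antisym)
  qed simp
  with part_a show ?thesis by blast
qed

end
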